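(* Let $p+q=4k$ with $k\ge1$. (i) If $p,q$ are even, $p\ge2$ and $q\ge6$, then $\mathbb{O}_{p,q}\simeq\mathbb{O}_{p+4,q-4}$. (ii) If $p,q$ are odd, $p\ge1$ and $q\ge3$, then $\mathbb{O}_{p,q}\simeq\mathbb{O}_{p+2,q-2}$. (The isomorphisms preserve the $\mathbb{Z}_2^n$-graded structure.)
   Context: $\mathbb{Z}_2=\{0,1\}$. For $p+q=n\ge3$, $\mathbb{O}_{p,q}$ is the real algebra with basis $\{u_x: x\in\mathbb{Z}_2^n\}$ and product $u_x\cdot u_y=(-1)^{f(x,y)}u_{x+y}$, where $f(x,y)=\sum_{1\le i<j<k\le n}(x_ix_jy_k+x_iy_jx_k+y_ix_jx_k)+\sum_{1\le i\le j\le n}x_iy_j+\sum_{1\le i\le p}x_iy_i$. Homogeneous elements are scalar multiples of some $u_x$. *)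

theory Defs
  imports Complex_Main
begin

text \<open>Elements of Z_2^n are boolean lists of length n; entry i (0-based) is x_(i+1).\<close>

definition Zvec :: "nat \<Rightarrow> bool list set" where
  "Zvec n = {xs. length xs = n}"

definition zadd :: "bool list \<Rightarrow> bool list \<Rightarrow> bool list" where
  "zadd xs ys = map2 (\<lambda>a b. a \<noteq> b) xs ys"

definition zbit :: "bool list \<Rightarrow> nat \<Rightarrow> nat" where
  "zbit xs i = of_bool (xs ! i)"

text \<open>The twisting function f(x,y) of O_{p,q}, n = p+q, indices shifted to 0-based.\<close>
definition twist :: "nat \<Rightarrow> nat \<Rightarrow> bool list \<Rightarrow> bool list \<Rightarrow> nat" where
  "twist p n x y =
     (\<Sum>k<n. \<Sum>j<k. \<Sum>i<j.
        zbit x i * zbit x j * zbit y k + zbit x i * zbit y j * zbit x k + zbit y i * zbit x j * zbit x k)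
   + (\<Sum>j<n. \<Sum>i\<le>j. zbit x i * zbit y j)
   + (\<Sum>i<p. zbit x i * zbit y i)"

text \<open>Elements of O_{p,q}: real coefficient functions supported on Z_2^n.\<close>
definition Oset :: "nat \<Rightarrow> (bool list \<Rightarrow> real) set" where
  "Oset n = {a. \<forall>z. z \<notin> Zvec n \<longrightarrow> a z = 0}"

definition ubasis :: "bool list \<Rightarrow> bool list \<Rightarrow> real" where
  "ubasis x = (\<lambda>z. if z = x then 1 else 0)"

text \<open>Product of O_{p,q} (n = p+q), extending u_x u_y = (-1)^f(x,y) u_(x+y) bilinearly.\<close>
definition Omul :: "nat \<Rightarrow> nat \<Rightarrow> (bool list \<Rightarrow> real) \<Rightarrow> (bool list \<Rightarrow> real) \<Rightarrow> (bool list \<Rightarrow> real)" where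
  "Omul p q a b = (\<lambda>z. if z \<in> Zvec (p+q) then
      (\<Sum>x\<in>Zvec (p+q). \<Sum>y\<in>Zvec (p+q).
         if zadd x y = z then (-1) ^ twist p (p+q) x y * a x * b y else 0)
     else 0)"

definition homogeneous :: "nat \<Rightarrow> (bool list \<Rightarrow> real) \<Rightarrow> bool" where
  "homogeneous n a \<longleftrightarrow> (\<exists>x\<in>Zvec n. \<exists>c::real. a = (\<lambda>z. c * ubasis x z))"

text \<open>Isomorphism of real algebras O_{p,q} \<cong> O_{p',q'} (same n) preserving the graded
  structure, i.e. mapping homogeneous elements exactly onto homogeneous elements.\<close>
definition graded_iso :: "nat \<Rightarrow> nat \<Rightarrow> nat \<Rightarrow> nat \<Rightarrow> bool" where
  "graded_iso p q p' q' \<longleftrightarrow> p + q = p' + q' \<and>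
     (\<exists>\<phi>. bij_betw \<phi> (Oset (p+q)) (Oset (p'+q')) \<and>
        (\<forall>a\<in>Oset (p+q). \<forall>b\<in>Oset (p+q). \<phi> (\<lambda>z. a z + b z) = (\<lambda>z. \<phi> a z + \<phi> b z)) \<and>
        (\<forall>c::real. \<forall>a\<in>Oset (p+q). \<phi> (\<lambda>z. c * a z) = (\<lambda>z. c * \<phi> a z)) \<and>
        (\<forall>a\<in>Oset (p+q). \<forall>b\<in>Oset (p+q). \<phi> (Omul p q a b) = Omul p' q' (\<phi> a) (\<phi> b)) \<and>
        (\<forall>a\<in>Oset (p+q). homogeneous (p+q) a \<longleftrightarrow> homogeneous (p'+q') (\<phi> a)))"

end

theory Submission
  imports Defs "HOL-Library.Z2"
begin

text \<open>Only the parity of the twist matters, and over Z_2 it has the closed form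
  f_p(x,y) = |y| e_2(x) + <x,y> (|x| + 1) + L(x,y) + <x,y>_p, where |x| is the weight, e_2 the
  second elementary symmetric function, L(x,y) the sum of x_i y_j over i <= j, and <x,y>_p the dot
  product of the first p coordinates. For a linear involution \<sigma> of Z_2^n, the map
  u_x \<mapsto> (-1)^s(x) u_(\<sigma> x) is a graded isomorphism O_(p,q) \<rightarrow> O_(p',q') as soon as
  f_p'(\<sigma> x, \<sigma> y) - f_p(x,y) is the coboundary s(x) + s(y) + s(x+y). We take the transvection
  \<sigma> x = x + <x,A> C + <x,C> A with A, C isotropic and orthogonal, and exhibit A, C, s explicitly:
  for the shift by 4, A and C live on the six coordinates p, ..., p+5; for the shift by 2, A is the
  all-ones vector, which is isotropic for the cubic and triangular parts of f only when 4 divides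
  n, and C = e_(p+1) + e_(p+2).\<close>

text \<open>The library simp rules rewrite + and * on bit to XOR and AND, which blocks ring
  normalisation.\<close>
declare add_bit_eq_xor [simp del] mult_bit_eq_and [simp del]

lemma bit_mult_self [simp]: "(a::bit) * a = a"
  by (cases a) auto

lemma bit_mult_self_left [simp]: "(a::bit) * (a * b) = a * b"
  by (cases a) auto

lemma bit_add_self [simp]: "(a::bit) + a = 0"
  by (cases a) auto

lemma of_nat_bit: "(of_nat m :: bit) = (if even m then 0 else 1)"
  by (induction m) auto

definition coord_sum :: "nat \<Rightarrow> (nat \<Rightarrow> bit) \<Rightarrow> bit" where
  "coord_sum n X = (\<Sum>i<n. X i)"

definition esym2 :: "nat \<Rightarrow> (nat \<Rightarrow> bit) \<Rightarrow> bit" where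
  "esym2 n X = (\<Sum>j<n. \<Sum>i<j. X i * X j)"

definition dotp :: "nat \<Rightarrow> (nat \<Rightarrow> bit) \<Rightarrow> (nat \<Rightarrow> bit) \<Rightarrow> bit" where
  "dotp n X Y = (\<Sum>i<n. X i * Y i)"

definition tri_form :: "nat \<Rightarrow> (nat \<Rightarrow> bit) \<Rightarrow> (nat \<Rightarrow> bit) \<Rightarrow> bit" where
  "tri_form n X Y = (\<Sum>j<n. \<Sum>i\<le>j. X i * Y j)"

definition cubic_form :: "nat \<Rightarrow> (nat \<Rightarrow> bit) \<Rightarrow> (nat \<Rightarrow> bit) \<Rightarrow> bit" where
  "cubic_form n X Y =
     (\<Sum>k<n. \<Sum>j<k. \<Sum>i<j. X i * X j * Y k + X i * Y j * X k + Y i * X j * X k)"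

definition twist_form :: "nat \<Rightarrow> nat \<Rightarrow> (nat \<Rightarrow> bit) \<Rightarrow> (nat \<Rightarrow> bit) \<Rightarrow> bit" where
  "twist_form n p X Y = cubic_form n X Y + tri_form n X Y + dotp p X Y"

lemma coord_sum_0 [simp]: "coord_sum 0 X = 0"
  by (simp add: coord_sum_def)

lemma coord_sum_Suc [simp]: "coord_sum (Suc n) X = coord_sum n X + X n"
  by (simp add: coord_sum_def)

lemma dotp_0 [simp]: "dotp 0 X Y = 0"
  by (simp add: dotp_def)

lemma dotp_Suc [simp]: "dotp (Suc n) X Y = dotp n X Y + X n * Y n"
  by (simp add: dotp_def)

lemma esym2_0 [simp]: "esym2 0 X = 0"
  by (simp add: esym2_def)

lemma esym2_Suc [simp]: "esym2 (Suc n) X = esym2 n X + coord_sum n X * X n"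
  by (simp add: esym2_def coord_sum_def sum_distrib_right)

lemma tri_form_0 [simp]: "tri_form 0 X Y = 0"
  by (simp add: tri_form_def)

lemma tri_form_Suc: "tri_form (Suc n) X Y = tri_form n X Y + coord_sum (Suc n) X * Y n"
proof -
  have "coord_sum (Suc n) X * Y n = (\<Sum>i\<le>n. X i * Y n)"
    by (simp add: coord_sum_def lessThan_Suc_atMost sum_distrib_right)
  then show ?thesis
    by (simp add: tri_form_def)
qed

lemma sum_symmetrized_pairs:
  "(\<Sum>j<n. \<Sum>i<j. X i * Y j + Y i * X j) = coord_sum n X * coord_sum n Y + dotp n X Y"
proof (induction n)
  case (Suc n)
  have "(\<Sum>i<n. X i * Y n + Y i * X n) = coord_sum n X * Y n + coord_sum n Y * X n"
    by (simp add: coord_sum_def sum.distrib sum_distrib_right)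
  with Suc show ?case
    by (simp add: algebra_simps)
qed simp

lemma cubic_form_eq:
  "cubic_form n X Y = coord_sum n Y * esym2 n X + dotp n X Y * (coord_sum n X + 1)"
proof (induction n)
  case (Suc n)
  have "(\<Sum>j<n. \<Sum>i<j. X i * X j * Y n + X i * Y j * X n + Y i * X j * X n)
        = Y n * esym2 n X + X n * (\<Sum>j<n. \<Sum>i<j. X i * Y j + Y i * X j)"
    by (simp add: esym2_def sum.distrib sum_distrib_left algebra_simps)
  then have "cubic_form (Suc n) X Y
      = cubic_form n X Y + Y n * esym2 n X + X n * (coord_sum n X * coord_sum n Y + dotp n X Y)"
    by (simp add: cubic_form_def sum_symmetrized_pairs)
  with Suc show ?case
    by (simp add: algebra_simps)
qed (simp add: cubic_form_def)

lemma twist_form_eq: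
  "twist_form n p X Y
     = coord_sum n Y * esym2 n X + dotp n X Y * (coord_sum n X + 1) + tri_form n X Y + dotp p X Y"
  by (simp add: twist_form_def cubic_form_eq)

lemma tri_form_swap:
  "tri_form n Y X = tri_form n X Y + coord_sum n X * coord_sum n Y + dotp n X Y"
  by (induction n) (simp_all add: tri_form_Suc algebra_simps)

lemma coord_sum_add [simp]: "coord_sum n (\<lambda>i. X i + Z i) = coord_sum n X + coord_sum n Z"
  by (simp add: coord_sum_def sum.distrib)

lemma coord_sum_scale [simp]: "coord_sum n (\<lambda>i. c * X i) = c * coord_sum n X"
  by (simp add: coord_sum_def sum_distrib_left)

lemma dotp_add_left [simp]: "dotp n (\<lambda>i. X i + Z i) Y = dotp n X Y + dotp n Z Y"
  by (simp add: dotp_def sum.distrib algebra_simps)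

lemma dotp_add_right [simp]: "dotp n Y (\<lambda>i. X i + Z i) = dotp n Y X + dotp n Y Z"
  by (simp add: dotp_def sum.distrib algebra_simps)

lemma dotp_scale_left [simp]: "dotp n (\<lambda>i. c * X i) Y = c * dotp n X Y"
  by (simp add: dotp_def sum_distrib_left algebra_simps)

lemma dotp_scale_right [simp]: "dotp n Y (\<lambda>i. c * X i) = c * dotp n Y X"
  by (simp add: dotp_def sum_distrib_left algebra_simps)

lemma tri_form_add_left [simp]: "tri_form n (\<lambda>i. X i + Z i) Y = tri_form n X Y + tri_form n Z Y"
  by (simp add: tri_form_def sum.distrib algebra_simps)

lemma tri_form_add_right [simp]: "tri_form n Y (\<lambda>i. X i + Z i) = tri_form n Y X + tri_form n Y Z"
  by (simp add: tri_form_def sum.distrib algebra_simps)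

lemma tri_form_scale_left [simp]: "tri_form n (\<lambda>i. c * X i) Y = c * tri_form n X Y"
  by (simp add: tri_form_def sum_distrib_left algebra_simps)

lemma tri_form_scale_right [simp]: "tri_form n Y (\<lambda>i. c * X i) = c * tri_form n Y X"
  by (simp add: tri_form_def sum_distrib_left algebra_simps)

lemma esym2_add [simp]:
  "esym2 n (\<lambda>i. X i + Z i) = esym2 n X + esym2 n Z + coord_sum n X * coord_sum n Z + dotp n X Z"
proof -
  have "esym2 n (\<lambda>i. X i + Z i) = esym2 n X + esym2 n Z + (\<Sum>j<n. \<Sum>i<j. X i * Z j + Z i * X j)"
    by (simp add: esym2_def sum.distrib algebra_simps)
  then show ?thesis
    by (simp add: sum_symmetrized_pairs add.assoc)
qed

lemma esym2_scale [simp]: "esym2 n (\<lambda>i. c * X i) = c * esym2 n X"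
  by (simp add: esym2_def sum_distrib_left algebra_simps)

definition basis_vec :: "nat \<Rightarrow> nat \<Rightarrow> bit" where
  "basis_vec a = (\<lambda>i. of_bool (i = a))"

lemma basis_vec_apply: "basis_vec a i = of_bool (i = a)"
  by (simp add: basis_vec_def)

lemma basis_vec_same [simp]: "basis_vec a a = 1"
  by (simp add: basis_vec_def)

lemma basis_vec_other [simp]: "i \<noteq> a \<Longrightarrow> basis_vec a i = 0"
  by (simp add: basis_vec_def)

lemma coord_sum_basis_vec [simp]: "coord_sum n (basis_vec a) = of_bool (a < n)"
  by (simp add: coord_sum_def basis_vec_apply)

lemma dotp_basis_vec_right [simp]: "dotp n X (basis_vec a) = (if a < n then X a else 0)"
  by (simp add: dotp_def basis_vec_apply)

lemma dotp_basis_vec_left [simp]: "dotp n (basis_vec a) X = (if a < n then X a else 0)"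
  by (simp add: dotp_def basis_vec_apply)

lemma esym2_basis_vec [simp]: "esym2 n (basis_vec a) = 0"
  by (induction n) (auto simp: basis_vec_apply coord_sum_def)

lemma tri_form_basis_vec_right [simp]:
  "tri_form n X (basis_vec a) = (if a < n then coord_sum (Suc a) X else 0)"
  by (induction n) (auto simp: tri_form_Suc basis_vec_apply less_Suc_eq)

lemma tri_form_basis_vec_left [simp]:
  "tri_form n (basis_vec a) X = (if a < n then coord_sum (Suc a) X + coord_sum n X + X a else 0)"
  using tri_form_swap[of n "basis_vec a" X] by (simp add: algebra_simps)

definition ones :: "nat \<Rightarrow> nat \<Rightarrow> bit" where
  "ones n = (\<lambda>i. of_bool (i < n))"

lemma ones_apply: "ones n i = of_bool (i < n)"
  by (simp add: ones_def)

lemma dotp_ones_right [simp]: "m \<le> n \<Longrightarrow> dotp m X (ones n) = coord_sum m X"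
  by (induction m) (auto simp: ones_apply)

lemma dotp_ones_left [simp]: "m \<le> n \<Longrightarrow> dotp m (ones n) X = coord_sum m X"
  by (induction m) (auto simp: ones_apply)

lemma coord_sum_ones [simp]: "m \<le> n \<Longrightarrow> coord_sum m (ones n) = of_nat m"
  by (induction m) (auto simp: ones_apply)

lemma sum_of_nat_bit_four_dvd:
  assumes "4 dvd m"
  shows "(\<Sum>j<m. (of_nat (j + c) :: bit)) = 0"
proof -
  obtain k where m: "m = 4 * k"
    using assms by (elim dvdE)
  have "(\<Sum>j<4 * k. (of_nat (j + c) :: bit)) = 0"
  proof (induction k)
    case (Suc k)
    have "4 * Suc k = Suc (Suc (Suc (Suc (4 * k))))"
      by simp
    then show ?case
      using Suc by (simp only:) (simp add: algebra_simps)
  qed simp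
  then show ?thesis
    by (simp add: m)
qed

lemma esym2_ones_self:
  assumes "4 dvd n"
  shows "esym2 n (ones n) = 0"
proof -
  have "m \<le> n \<Longrightarrow> esym2 m (ones n) = (\<Sum>j<m. of_nat j)" for m
    by (induction m) (auto simp: ones_apply)
  then show ?thesis
    using sum_of_nat_bit_four_dvd[OF assms, of 0] by simp
qed

lemma tri_form_ones_self:
  assumes "4 dvd n"
  shows "tri_form n (ones n) (ones n) = 0"
proof -
  have "m \<le> n \<Longrightarrow> tri_form m (ones n) (ones n) = (\<Sum>j<m. of_nat (j + 1))" for m
    by (induction m) (auto simp: tri_form_Suc ones_apply)
  then show ?thesis
    using sum_of_nat_bit_four_dvd[OF assms, of 1] by simp
qed

lemma zadd_Zvec: "x \<in> Zvec n \<Longrightarrow> y \<in> Zvec n \<Longrightarrow> zadd x y \<in> Zvec n"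
  by (simp add: Zvec_def zadd_def)

locale signed_relabelling =
  fixes n :: nat and \<sigma> :: "bool list \<Rightarrow> bool list" and g :: "bool list \<Rightarrow> real"
  assumes \<sigma>_Zvec: "x \<in> Zvec n \<Longrightarrow> \<sigma> x \<in> Zvec n"
    and \<sigma>_involution: "x \<in> Zvec n \<Longrightarrow> \<sigma> (\<sigma> x) = x"
    and \<sigma>_zadd: "x \<in> Zvec n \<Longrightarrow> y \<in> Zvec n \<Longrightarrow> \<sigma> (zadd x y) = zadd (\<sigma> x) (\<sigma> y)"
    and g_square: "g x * g x = 1"
begin

definition relabel :: "(bool list \<Rightarrow> real) \<Rightarrow> bool list \<Rightarrow> real" where
  "relabel a = (\<lambda>z. if z \<in> Zvec n then g (\<sigma> z) * a (\<sigma> z) else 0)"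

lemma relabel_at_\<sigma>: "x \<in> Zvec n \<Longrightarrow> relabel a (\<sigma> x) = g x * a x"
  by (simp add: relabel_def \<sigma>_Zvec \<sigma>_involution)

lemma \<sigma>_eq_iff: "x \<in> Zvec n \<Longrightarrow> y \<in> Zvec n \<Longrightarrow> \<sigma> x = y \<longleftrightarrow> x = \<sigma> y"
  by (metis \<sigma>_involution)

lemma bij_betw_\<sigma>: "bij_betw \<sigma> (Zvec n) (Zvec n)"
  by (rule bij_betw_byWitness[where f'=\<sigma>]) (auto simp: \<sigma>_Zvec \<sigma>_involution)

lemma sum_Zvec_\<sigma>_\<sigma>:
  "(\<Sum>x\<in>Zvec n. \<Sum>y\<in>Zvec n. F (\<sigma> x) (\<sigma> y)) = (\<Sum>x\<in>Zvec n. \<Sum>y\<in>Zvec n. F x y)"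
proof -
  have "(\<Sum>y\<in>Zvec n. F x (\<sigma> y)) = (\<Sum>y\<in>Zvec n. F x y)" for x
    by (rule sum.reindex_bij_betw[OF bij_betw_\<sigma>])
  then show ?thesis
    using sum.reindex_bij_betw[OF bij_betw_\<sigma>, of "\<lambda>x. \<Sum>y\<in>Zvec n. F x y"] by simp
qed

lemma bij_betw_relabel: "bij_betw relabel (Oset n) (Oset n)"
proof (rule bij_betw_byWitness[where f'="\<lambda>b z. if z \<in> Zvec n then g z * b (\<sigma> z) else 0"])
  have "g x * (g x * a) = a" for x a
    using g_square[of x] by (simp add: mult.assoc[symmetric])
  then show "\<forall>a\<in>Oset n. (\<lambda>z. if z \<in> Zvec n then g z * relabel a (\<sigma> z) else 0) = a"
    and "\<forall>b\<in>Oset n. relabel (\<lambda>z. if z \<in> Zvec n then g z * b (\<sigma> z) else 0) = b"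
    by (auto simp: relabel_def Oset_def \<sigma>_Zvec \<sigma>_involution)
qed (auto simp: relabel_def Oset_def)

lemma relabel_ubasis:
  "x \<in> Zvec n \<Longrightarrow> relabel (\<lambda>z. c * ubasis x z) = (\<lambda>z. (c * g x) * ubasis (\<sigma> x) z)"
  using \<sigma>_Zvec by (auto simp: relabel_def ubasis_def \<sigma>_eq_iff \<sigma>_involution)

lemma homogeneous_relabel_iff:
  assumes "a \<in> Oset n"
  shows "homogeneous n (relabel a) \<longleftrightarrow> homogeneous n a"
proof
  assume "homogeneous n (relabel a)"
  then obtain y c where y: "y \<in> Zvec n" and ra: "relabel a = (\<lambda>z. c * ubasis y z)"
    unfolding homogeneous_def by blast
  have "a z = (c * g (\<sigma> y)) * ubasis (\<sigma> y) z" for z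
  proof (cases "z \<in> Zvec n")
    case True
    have "a z = g z * relabel a (\<sigma> z)"
      using g_square[of z] by (simp add: relabel_at_\<sigma>[OF True] mult.assoc[symmetric])
    then show ?thesis
      using True y by (auto simp: ra ubasis_def \<sigma>_eq_iff \<sigma>_involution)
  next
    case False
    then show ?thesis
      using assms \<sigma>_Zvec[OF y] by (auto simp: Oset_def ubasis_def)
  qed
  then show "homogeneous n a"
    unfolding homogeneous_def using \<sigma>_Zvec[OF y] by blast
next
  assume "homogeneous n a"
  then show "homogeneous n (relabel a)"
    unfolding homogeneous_def using relabel_ubasis \<sigma>_Zvec by blast
qed

lemma relabel_Omul:
  assumes pq: "p + q = n" "p' + q' = n"
    and cocycle: "\<And>x y. x \<in> Zvec n \<Longrightarrow> y \<in> Zvec n \<Longrightarrow>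
       (-1::real) ^ twist p' n (\<sigma> x) (\<sigma> y) * (g x * g y) = (-1) ^ twist p n x y * g (zadd x y)"
  shows "relabel (Omul p q a b) = Omul p' q' (relabel a) (relabel b)"
proof
  fix z
  show "relabel (Omul p q a b) z = Omul p' q' (relabel a) (relabel b) z"
  proof (cases "z \<in> Zvec n")
    case False
    then show ?thesis
      using pq by (simp add: relabel_def Omul_def)
  next
    case z: True
    have summand: "(if zadd (\<sigma> x) (\<sigma> y) = z
          then (-1) ^ twist p' n (\<sigma> x) (\<sigma> y) * relabel a (\<sigma> x) * relabel b (\<sigma> y) else 0)
        = g (\<sigma> z) * (if zadd x y = \<sigma> z then (-1) ^ twist p n x y * a x * b y else 0)"
      if x: "x \<in> Zvec n" and y: "y \<in> Zvec n" for x y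
    proof -
      have sum_iff: "zadd (\<sigma> x) (\<sigma> y) = z \<longleftrightarrow> zadd x y = \<sigma> z"
        using \<sigma>_zadd[OF x y] \<sigma>_eq_iff[OF zadd_Zvec[OF x y] z] by simp
      have "(-1) ^ twist p' n (\<sigma> x) (\<sigma> y) * relabel a (\<sigma> x) * relabel b (\<sigma> y)
          = ((-1) ^ twist p' n (\<sigma> x) (\<sigma> y) * (g x * g y)) * (a x * b y)"
        by (simp add: relabel_at_\<sigma> x y algebra_simps)
      also have "\<dots> = g (zadd x y) * ((-1) ^ twist p n x y * a x * b y)"
        unfolding cocycle[OF x y] by (simp add: algebra_simps)
      finally show ?thesis
        using sum_iff by auto
    qed
    have "Omul p' q' (relabel a) (relabel b) z = (\<Sum>x\<in>Zvec n. \<Sum>y\<in>Zvec n.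
        if zadd (\<sigma> x) (\<sigma> y) = z
        then (-1) ^ twist p' n (\<sigma> x) (\<sigma> y) * relabel a (\<sigma> x) * relabel b (\<sigma> y) else 0)"
      unfolding Omul_def pq
      using z sum_Zvec_\<sigma>_\<sigma>[of "\<lambda>x y. if zadd x y = z
        then (-1) ^ twist p' n x y * relabel a x * relabel b y else 0"]
      by simp
    also have "\<dots> = g (\<sigma> z) * (\<Sum>x\<in>Zvec n. \<Sum>y\<in>Zvec n.
        if zadd x y = \<sigma> z then (-1) ^ twist p n x y * a x * b y else 0)"
      by (simp add: summand sum_distrib_left)
    also have "\<dots> = relabel (Omul p q a b) z"
      unfolding Omul_def pq using z by (simp add: relabel_def \<sigma>_Zvec)
    finally show ?thesis ..
  qed
qed

lemma graded_iso_relabel: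
  assumes "p + q = n" "p' + q' = n"
    and "\<And>x y. x \<in> Zvec n \<Longrightarrow> y \<in> Zvec n \<Longrightarrow>
       (-1::real) ^ twist p' n (\<sigma> x) (\<sigma> y) * (g x * g y) = (-1) ^ twist p n x y * g (zadd x y)"
  shows "graded_iso p q p' q'"
  unfolding graded_iso_def
proof (intro conjI exI[of _ relabel])
  show "p + q = p' + q'"
    using assms by simp
qed (use assms in \<open>simp_all add: bij_betw_relabel relabel_Omul homogeneous_relabel_iff\<close>,
     auto simp: relabel_def algebra_simps)

end

definition transvection :: "nat \<Rightarrow> (nat \<Rightarrow> bit) \<Rightarrow> (nat \<Rightarrow> bit) \<Rightarrow> (nat \<Rightarrow> bit) \<Rightarrow> nat \<Rightarrow> bit" where
  "transvection n A C X = (\<lambda>i. X i + dotp n X A * C i + dotp n X C * A i)"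

lemma transvection_add:
  "transvection n A C (\<lambda>i. X i + Y i) = (\<lambda>i. transvection n A C X i + transvection n A C Y i)"
  by (simp add: transvection_def algebra_simps)

lemma dotp_commute: "dotp n X Y = dotp n Y X"
  by (simp add: dotp_def mult.commute)

lemma transvection_involutive:
  assumes "dotp n A A = 0" "dotp n C C = 0" "dotp n A C = 0"
  shows "transvection n A C (transvection n A C X) = X"
  using assms by (simp add: transvection_def dotp_commute[of n C A])

definition to_bits :: "nat \<Rightarrow> bool list \<Rightarrow> nat \<Rightarrow> bit" where
  "to_bits n x = (\<lambda>i. of_bool (i < n \<and> x ! i))"

definition of_bits :: "nat \<Rightarrow> (nat \<Rightarrow> bit) \<Rightarrow> bool list" where
  "of_bits n X = map (\<lambda>i. X i = 1) [0..<n]"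

lemma of_bits_Zvec: "of_bits n X \<in> Zvec n"
  by (simp add: of_bits_def Zvec_def)

lemma to_bits_of_bits: "\<forall>i\<ge>n. X i = 0 \<Longrightarrow> to_bits n (of_bits n X) = X"
  by (fastforce simp: to_bits_def of_bits_def)

lemma to_bits_inj:
  assumes "x \<in> Zvec n" "y \<in> Zvec n" and eq: "to_bits n x = to_bits n y"
  shows "x = y"
proof (rule nth_equalityI)
  show "length x = length y"
    using assms by (simp add: Zvec_def)
  fix i
  assume "i < length x"
  then show "x ! i = y ! i"
    using fun_cong[OF eq, of i] assms by (simp add: to_bits_def Zvec_def of_bool_eq_iff)
qed

lemma to_bits_zadd:
  assumes "x \<in> Zvec n" "y \<in> Zvec n"
  shows "to_bits n (zadd x y) = (\<lambda>i. to_bits n x i + to_bits n y i)"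
proof
  fix i
  show "to_bits n (zadd x y) i = to_bits n x i + to_bits n y i"
    using assms by (cases "x ! i"; cases "y ! i") (auto simp: Zvec_def zadd_def to_bits_def)
qed

lemma of_nat_twist: "p \<le> n \<Longrightarrow> (of_nat (twist p n x y) :: bit) = twist_form n p (to_bits n x) (to_bits n y)"
  by (auto simp: twist_def twist_form_def cubic_form_def tri_form_def dotp_def to_bits_def zbit_def
      intro!: sum.cong)

definition bit_sign :: "bit \<Rightarrow> real" where
  "bit_sign b = (if b = 0 then 1 else -1)"

lemma bit_sign_add: "bit_sign (a + b) = bit_sign a * bit_sign b"
  by (cases a; cases b) (auto simp: bit_sign_def)

lemma bit_sign_square: "bit_sign b * bit_sign b = 1"
  by (simp add: bit_sign_def)

lemma power_minus_one_eq_bit_sign: "(-1::real) ^ m = bit_sign (of_nat m)"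
  by (simp add: bit_sign_def of_nat_bit)

lemma graded_iso_of_coboundary:
  fixes s :: "(nat \<Rightarrow> bit) \<Rightarrow> bit"
  assumes pq: "p + q = n" "p' + q' = n"
    and support: "\<forall>i\<ge>n. A i = 0" "\<forall>i\<ge>n. C i = 0"
    and isotropic: "dotp n A A = 0" "dotp n C C = 0" "dotp n A C = 0"
    and coboundary: "\<And>X Y. twist_form n p' (transvection n A C X) (transvection n A C Y) + s X + s Y
                          = twist_form n p X Y + s (\<lambda>i. X i + Y i)"
  shows "graded_iso p q p' q'"
proof -
  define \<sigma> where "\<sigma> x = of_bits n (transvection n A C (to_bits n x))" for x
  define g where "g x = bit_sign (s (to_bits n x))" for x
  have to_bits_\<sigma>: "to_bits n (\<sigma> x) = transvection n A C (to_bits n x)" for x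
    unfolding \<sigma>_def using support by (intro to_bits_of_bits) (simp add: transvection_def to_bits_def)
  have \<sigma>_Zvec: "\<sigma> x \<in> Zvec n" for x
    by (simp add: \<sigma>_def of_bits_Zvec)
  interpret signed_relabelling n \<sigma> g
  proof
    show "\<sigma> x \<in> Zvec n" for x
      by (fact \<sigma>_Zvec)
    show "\<sigma> (\<sigma> x) = x" if "x \<in> Zvec n" for x
      using that \<sigma>_Zvec by (intro to_bits_inj[of _ n])
        (simp_all add: to_bits_\<sigma> transvection_involutive[OF isotropic])
    show "\<sigma> (zadd x y) = zadd (\<sigma> x) (\<sigma> y)" if "x \<in> Zvec n" "y \<in> Zvec n" for x y
      using that \<sigma>_Zvec by (intro to_bits_inj[of _ n])
        (simp_all add: zadd_Zvec to_bits_\<sigma> to_bits_zadd transvection_add)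
    show "g x * g x = 1" for x
      by (simp add: g_def bit_sign_square)
  qed
  show ?thesis
  proof (rule graded_iso_relabel[OF pq])
    fix x y
    assume x: "x \<in> Zvec n" and y: "y \<in> Zvec n"
    have "p \<le> n" "p' \<le> n"
      using pq by auto
    then show "(-1::real) ^ twist p' n (\<sigma> x) (\<sigma> y) * (g x * g y) = (-1) ^ twist p n x y * g (zadd x y)"
      by (simp add: power_minus_one_eq_bit_sign of_nat_twist to_bits_\<sigma> g_def to_bits_zadd x y
          flip: bit_sign_add coboundary add.assoc)
  qed
qed

lemma graded_iso_shift4:
  assumes "p \<ge> 1" "q \<ge> 5"
  shows "graded_iso p q (p + 4) (q - 4)"
proof -
  obtain r where p: "p = r + 1"
    using assms by (metis le_add_diff_inverse2)
  define n where "n = p + q"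
  txt \<open>Coordinates are 0-based: r, ..., r+5 are the coordinates p, ..., p+5 of the 1-based
    notation.\<close>
  define A where "A = (\<lambda>i. basis_vec r i + basis_vec (r + 1) i + basis_vec (r + 2) i + basis_vec (r + 5) i)"
  define C where "C = (\<lambda>i. basis_vec (r + 1) i + basis_vec (r + 2) i + basis_vec (r + 3) i + basis_vec (r + 4) i)"
  define s where "s X =
      X (r + 1) * X (r + 2) + X (r + 1) * X (r + 3) + X (r + 1) * X (r + 4)
    + X (r + 2) * X (r + 3) + X (r + 2) * X (r + 4) + X (r + 3) * X (r + 4)
    + (X (r + 2) + X (r + 4)) * dotp n X A
    + (X r + X (r + 2) + X (r + 3) + X (r + 4) + X (r + 5)) * dotp n X C
    + dotp n X A * dotp n X C" for X
  have r5: "r + 5 < n"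
    using assms by (simp add: n_def p)
  show ?thesis
  proof (rule graded_iso_of_coboundary[where n=n and A=A and C=C and s=s])
    show "p + q = n" "p + 4 + (q - 4) = n"
      using assms by (simp_all add: n_def)
    show "\<forall>i\<ge>n. A i = 0" "\<forall>i\<ge>n. C i = 0"
      using r5 by (auto simp: A_def C_def basis_vec_apply)
    show "dotp n A A = 0" "dotp n C C = 0" "dotp n A C = 0"
      using r5 by (simp_all add: A_def C_def)
    show "twist_form n (p + 4) (transvection n A C X) (transvection n A C Y) + s X + s Y
          = twist_form n p X Y + s (\<lambda>i. X i + Y i)" for X Y
      using r5 unfolding twist_form_eq transvection_def s_def A_def C_def p
      by (simp add: numeral_eq_Suc del: dotp_Suc coord_sum_Suc) (simp add: algebra_simps)
  qed
qed

lemma graded_iso_shift2: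
  assumes "4 dvd p + q" "odd p" "q \<ge> 2"
  shows "graded_iso p q (p + 2) (q - 2)"
proof -
  define n where "n = p + q"
  define C where "C = (\<lambda>i. basis_vec p i + basis_vec (p + 1) i)"
  define s where "s X = X p * X (p + 1) + (X p + X (p + 1)) * (tri_form n X (ones n) + coord_sum (p + 2) X)
    + coord_sum n X * X p" for X
  have n4: "4 dvd n" and p2: "p + 2 \<le> n"
    using assms by (simp_all add: n_def)
  then have ones_n: "coord_sum n (ones n) = 0" "esym2 n (ones n) = 0" "tri_form n (ones n) (ones n) = 0"
    by (auto simp: of_nat_bit esym2_ones_self tri_form_ones_self elim: dvdE)
  have ones_p: "of_nat p = (1::bit)" "ones n p = 1" "ones n (p + 1) = 1"
      "dotp (p + 2) (ones n) (ones n) = 1" "coord_sum (p + 2) (ones n) = 1"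
    using p2 assms(2) by (simp_all add: of_nat_bit ones_apply)
  have tri_ones_left: "tri_form n (ones n) Z = tri_form n Z (ones n) + coord_sum n Z" for Z
    using tri_form_swap[of n "ones n" Z] p2 by (simp add: ones_n)
  show ?thesis
  proof (rule graded_iso_of_coboundary[where n=n and A="ones n" and C=C and s=s])
    show "p + q = n" "p + 2 + (q - 2) = n"
      using assms by (simp_all add: n_def)
    show "\<forall>i\<ge>n. ones n i = 0" "\<forall>i\<ge>n. C i = 0"
      using p2 by (auto simp: C_def ones_apply)
    show "dotp n (ones n) (ones n) = 0" "dotp n C C = 0" "dotp n (ones n) C = 0"
      using p2 ones_n by (simp_all add: C_def ones_apply)
    show "twist_form n (p + 2) (transvection n (ones n) C X) (transvection n (ones n) C Y) + s X + s Y
          = twist_form n p X Y + s (\<lambda>i. X i + Y i)" for X Y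
      using p2 unfolding twist_form_eq transvection_def s_def C_def
      by (simp add: ones_n ones_p tri_ones_left[of X] tri_ones_left[of Y] del: dotp_Suc coord_sum_Suc)
        (simp add: algebra_simps)
  qed
qed

theorem mainTheorem6:
  fixes p q k :: nat
  assumes "k \<ge> 1" and "p + q = 4 * k"
  shows "(even p \<and> even q \<and> p \<ge> 2 \<and> q \<ge> 6 \<longrightarrow> graded_iso p q (p + 4) (q - 4)) \<and>
         (odd p \<and> odd q \<and> p \<ge> 1 \<and> q \<ge> 3 \<longrightarrow> graded_iso p q (p + 2) (q - 2))"
  using assms graded_iso_shift4[of p q] graded_iso_shift2[of p q] by auto

end
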